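(* Let $\Delta\subset\mathbb{S}^2$ be a planar flag complex and let $(\Delta_1,\Delta_2)$ be a strong visual decomposition of $\Delta$ along an induced 4-cycle $\sigma$. If $R$ is a region (connected component) of $\mathbb{S}^2-\Delta$, then $R$ is a region of $\mathbb{S}^2-\Delta_1$ or a region of $\mathbb{S}^2-\Delta_2$.
   Context: A flag complex is a simplicial complex in which every complete subgraph of the 1-skeleton spans a simplex. For $\Delta\subset\mathbb{S}^2$, an induced 4-cycle $\sigma$ strongly separates $\Delta$ if $\Delta$ meets both components $U_1,U_2$ of $\mathbb{S}^2-\sigma$. In that case, letting $\Delta_i$ be $\sigma$ together with the components of $\Delta-\sigma$ lying in $U_i$, one has $\Delta=\Delta_1\cup\Delta_2$ and $\Delta_1\cap\Delta_2=\sigma$; the pair $(\Delta_1,\Delta_2)$ is called the strong visual decomposition of $\Delta$ along $\sigma$. *)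

theory Defs
  imports "HOL-Analysis.Analysis"
begin

definition simplicial_complex :: "'v set set \<Rightarrow> bool" where
  "simplicial_complex K \<longleftrightarrow> finite K \<and>
     (\<forall>s\<in>K. finite s \<and> s \<noteq> {}) \<and>
     (\<forall>s\<in>K. \<forall>t. t \<subseteq> s \<and> t \<noteq> {} \<longrightarrow> t \<in> K)"

definition vertices :: "'v set set \<Rightarrow> 'v set" where
  "vertices K = \<Union>K"

definition flag_complex :: "'v set set \<Rightarrow> bool" where
  "flag_complex K \<longleftrightarrow> simplicial_complex K \<and>
     (\<forall>S. S \<subseteq> vertices K \<and> S \<noteq> {} \<and>
          (\<forall>u\<in>S. \<forall>v\<in>S. u \<noteq> v \<longrightarrow> {u, v} \<in> K) \<longrightarrow> S \<in> K)"

text \<open>Standard geometric realization, as barycentric coordinate functions.\<close>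
definition realization :: "'v set set \<Rightarrow> ('v \<Rightarrow> real) set" where
  "realization K = (\<Union>s\<in>K. {f. (\<forall>v. 0 \<le> f v) \<and> (\<forall>v. v \<notin> s \<longrightarrow> f v = 0) \<and> sum f s = 1})"

definition full_subcomplex :: "'v set set \<Rightarrow> 'v set \<Rightarrow> 'v set set" where
  "full_subcomplex K W = {s \<in> K. s \<subseteq> W}"

definition induced_4cycle :: "'v set set \<Rightarrow> 'v \<Rightarrow> 'v \<Rightarrow> 'v \<Rightarrow> 'v \<Rightarrow> bool" where
  "induced_4cycle K a b c d \<longleftrightarrow> distinct [a, b, c, d] \<and>
     {a, b} \<in> K \<and> {b, c} \<in> K \<and> {c, d} \<in> K \<and> {d, a} \<in> K \<and>
     {a, c} \<notin> K \<and> {b, d} \<notin> K"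

abbreviation S2 :: "(real^3) set" where
  "S2 \<equiv> sphere 0 1"

definition planar_embedding :: "'v set set \<Rightarrow> (('v \<Rightarrow> real) \<Rightarrow> real^3) \<Rightarrow> bool" where
  "planar_embedding K e \<longleftrightarrow> continuous_on (realization K) e \<and>
     inj_on e (realization K) \<and> e ` realization K \<subseteq> S2"

text \<open>The piece Delta_i of the strong visual decomposition: sigma together with the
  components of Delta - sigma lying in U.\<close>
definition visual_piece :: "(real^3) set \<Rightarrow> (real^3) set \<Rightarrow> (real^3) set \<Rightarrow> (real^3) set" where
  "visual_piece D \<sigma> U = \<sigma> \<union> \<Union>{C. C \<in> components (D - \<sigma>) \<and> C \<subseteq> U}"

end

theory Submission
  imports Defs
begin

text \<open>A region R of the complement of \<Delta> avoids \<sigma>, so it lies in one of the two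
  components U of the complement of \<sigma>. Every point of \<Delta> inside U lies on a
  component of \<Delta> - \<sigma> contained in U, hence belongs to the piece on the side of U.
  So a connected set containing R and avoiding that piece stays in U, avoids all of \<Delta>,
  and by maximality of R equals R.\<close>

lemma subset_visual_piece: "\<sigma> \<subseteq> visual_piece D \<sigma> U"
  unfolding visual_piece_def by blast

lemma visual_piece_subset:
  assumes "\<sigma> \<subseteq> D"
  shows "visual_piece D \<sigma> U \<subseteq> D"
  using assms unfolding visual_piece_def by (auto dest: in_components_subset)

lemma Int_component_subset_visual_piece:
  assumes "D \<subseteq> S" and U: "U \<in> components (S - \<sigma>)"
  shows "D \<inter> U \<subseteq> visual_piece D \<sigma> U"
proof
  fix y assume y: "y \<in> D \<inter> U"
  show "y \<in> visual_piece D \<sigma> U"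
  proof (cases "y \<in> \<sigma>")
    case True
    then show ?thesis using subset_visual_piece by blast
  next
    case False
    let ?C = "connected_component_set (D - \<sigma>) y"
    have C: "?C \<in> components (D - \<sigma>)" and yC: "y \<in> ?C"
      using y False by (auto intro: componentsI)
    have "?C \<subseteq> S - \<sigma>"
      using \<open>D \<subseteq> S\<close> connected_component_subset by blast
    moreover have "U \<inter> ?C \<noteq> {}"
      using y yC by blast
    ultimately have "?C \<subseteq> U"
      using components_maximal[OF U] by blast
    with C yC show ?thesis
      unfolding visual_piece_def by blast
  qed
qed

lemma component_of_visual_piece_complement:
  fixes S D \<sigma> U R :: "(real^3) set"
  assumes "\<sigma> \<subseteq> D" and "D \<subseteq> S"
    and U: "U \<in> components (S - \<sigma>)"
    and R: "R \<in> components (S - D)" and "R \<subseteq> U"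
  shows "R \<in> components (S - visual_piece D \<sigma> U)"
proof -
  have "R \<noteq> {}" and "connected R" and "R \<subseteq> S - D"
    using R by (auto simp: in_components_nonempty in_components_subset in_components_connected)
  show ?thesis
  proof (subst in_components_maximal, intro conjI allI impI)
    show "R \<noteq> {}" "connected R" by fact+
    show "R \<subseteq> S - visual_piece D \<sigma> U"
      using \<open>R \<subseteq> S - D\<close> visual_piece_subset[OF \<open>\<sigma> \<subseteq> D\<close>] by blast
    fix T assume T: "T \<noteq> {} \<and> R \<subseteq> T \<and> T \<subseteq> S - visual_piece D \<sigma> U \<and> connected T"
    then have "T \<subseteq> S - \<sigma>"
      using subset_visual_piece by blast
    moreover have "U \<inter> T \<noteq> {}"
      using T \<open>R \<noteq> {}\<close> \<open>R \<subseteq> U\<close> by blast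
    ultimately have "T \<subseteq> U"
      using T components_maximal[OF U] by blast
    with T have "T \<subseteq> S - D"
      using Int_component_subset_visual_piece[OF \<open>D \<subseteq> S\<close> U] by blast
    moreover have "R \<inter> T \<noteq> {}"
      using T \<open>R \<noteq> {}\<close> by blast
    ultimately have "T \<subseteq> R"
      using T components_maximal[OF R] by blast
    with T show "T = R" by blast
  qed
qed

lemma realization_full_subcomplex_subset:
  "realization (full_subcomplex K W) \<subseteq> realization K"
  unfolding realization_def full_subcomplex_def by auto

theorem lemma4p14:
  fixes K :: "'v set set" and e :: "('v \<Rightarrow> real) \<Rightarrow> real^3"
    and a b c d :: 'v and U1 U2 R :: "(real^3) set"
  assumes "flag_complex K"
    and "planar_embedding K e"
    and "induced_4cycle K a b c d"
    and "components (S2 - e ` realization (full_subcomplex K {a, b, c, d})) = {U1, U2}"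
    and "U1 \<noteq> U2"
    and "e ` realization K \<inter> U1 \<noteq> {}"
    and "e ` realization K \<inter> U2 \<noteq> {}"
    and "R \<in> components (S2 - e ` realization K)"
  shows "R \<in> components (S2 - visual_piece (e ` realization K)
                               (e ` realization (full_subcomplex K {a, b, c, d})) U1)
       \<or> R \<in> components (S2 - visual_piece (e ` realization K)
                               (e ` realization (full_subcomplex K {a, b, c, d})) U2)"
proof -
  let ?D = "e ` realization K" and ?\<sigma> = "e ` realization (full_subcomplex K {a, b, c, d})"
  have \<sigma>D: "?\<sigma> \<subseteq> ?D"
    by (intro image_mono realization_full_subcomplex_subset)
  have DS: "?D \<subseteq> S2"
    using assms(2) by (simp add: planar_embedding_def)
  have R: "R \<noteq> {}" "connected R" "R \<subseteq> S2 - ?D"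
    using assms(8) by (auto simp: in_components_nonempty in_components_connected in_components_subset)
  then obtain U where U: "U \<in> components (S2 - ?\<sigma>)" and "R \<subseteq> U"
    using exists_component_superset[of R "S2 - ?\<sigma>"] \<sigma>D by blast
  then have "R \<in> components (S2 - visual_piece ?D ?\<sigma> U)"
    using component_of_visual_piece_complement[OF \<sigma>D DS U assms(8)] by blast
  moreover have "U = U1 \<or> U = U2"
    using U assms(4) by blast
  ultimately show ?thesis by blast
qed

end
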